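(* Let $G$ be a connected finite simple undirected graph with at least two vertices and maximum degree $d_G$, and let $W:V_G\to\mathbb{R}$ satisfy $W(x)\le -d_G$ for all $x\in V_G$. Let $\psi$ be the ground state of $H_{G,W}$, chosen with $\psi(x)>0$ for all $x$ and $\sum_x \psi(x)^2=1$, let $E$ be the ground energy (smallest eigenvalue) of $H_{G,W}$, and let $\gamma$ be the gap between the smallest and second-smallest eigenvalues of $H_{G,W}$. Then $E<0$ and $$-\frac{1}{2E}\Phi_H^2 \le \gamma \le 2\Phi_H,$$ where $$\Phi_H=\min_{\emptyset\neq S\subsetneq V_G}\frac{F_S}{\min\{C_S,C_{\bar S}\}},\qquad F_S=\sum_{\substack{x\in S,\ y\notin S\\ x\sim y}}\psi(x)\psi(y),\qquad C_S=\sum_{x\in S}\psi(x)^2,\qquad C_{\bar S}=\sum_{x\notin S}\psi(x)^2,$$ and $x\sim y$ denotes adjacency in $G$.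
   Context: For a finite simple undirected graph $G$ with vertex set $V_G$, let $\mathcal{H}_G$ be the complex Hilbert space with orthonormal basis $\{|x\rangle : x\in V_G\}$. The graph Laplacian is $L_G=\sum_{x} d_x |x\rangle\langle x| - \sum_{x\sim y}|x\rangle\langle y|$, where $d_x$ is the degree of $x$ and the second sum runs over ordered pairs of adjacent vertices. For a potential $W:V_G\to\mathbb{R}$, $H_{G,W}=L_G+\sum_{x} W(x)|x\rangle\langle x|$. By the Perron–Frobenius theorem, for connected $G$ the ground state of $H_{G,W}$ is nondegenerate and can be chosen with all amplitudes strictly positive. *)

theory Defs
  imports Complex_Main
begin

definition simple_graph :: "'a set \<Rightarrow> ('a \<Rightarrow> 'a \<Rightarrow> bool) \<Rightarrow> bool" where
  "simple_graph V Adj \<longleftrightarrow> finite V \<and> (\<forall>x y. Adj x y \<longrightarrow> x \<in> V \<and> y \<in> V)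
     \<and> (\<forall>x y. Adj x y \<longrightarrow> Adj y x) \<and> (\<forall>x. \<not> Adj x x)"

definition connected_graph :: "'a set \<Rightarrow> ('a \<Rightarrow> 'a \<Rightarrow> bool) \<Rightarrow> bool" where
  "connected_graph V Adj \<longleftrightarrow> (\<forall>x\<in>V. \<forall>y\<in>V. Adj\<^sup>*\<^sup>* x y)"

definition deg :: "'a set \<Rightarrow> ('a \<Rightarrow> 'a \<Rightarrow> bool) \<Rightarrow> 'a \<Rightarrow> nat" where
  "deg V Adj x = card {y\<in>V. Adj x y}"

definition max_deg :: "'a set \<Rightarrow> ('a \<Rightarrow> 'a \<Rightarrow> bool) \<Rightarrow> nat" where
  "max_deg V Adj = Max (deg V Adj ` V)"

text \<open>The Schroedinger operator H = L + W acting on functions V \<rightarrow> 'b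
  (coefficients outside V are irrelevant).\<close>
definition Hop :: "'a set \<Rightarrow> ('a \<Rightarrow> 'a \<Rightarrow> bool) \<Rightarrow> ('a \<Rightarrow> real) \<Rightarrow> ('a \<Rightarrow> 'b::real_algebra_1) \<Rightarrow> 'a \<Rightarrow> 'b" where
  "Hop V Adj W f x = of_real (real (deg V Adj x) + W x) * f x - (\<Sum>y\<in>{y\<in>V. Adj x y}. f y)"

text \<open>Eigenvalues of H on the complex Hilbert space with basis V
  (H is Hermitian, so all eigenvalues are real).\<close>
definition eigvals :: "'a set \<Rightarrow> ('a \<Rightarrow> 'a \<Rightarrow> bool) \<Rightarrow> ('a \<Rightarrow> real) \<Rightarrow> real set" where
  "eigvals V Adj W = {lam. \<exists>f :: 'a \<Rightarrow> complex. (\<exists>x\<in>V. f x \<noteq> 0) \<and>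
       (\<forall>x\<in>V. Hop V Adj W f x = of_real lam * f x)}"

definition ground_energy :: "'a set \<Rightarrow> ('a \<Rightarrow> 'a \<Rightarrow> bool) \<Rightarrow> ('a \<Rightarrow> real) \<Rightarrow> real" where
  "ground_energy V Adj W = Min (eigvals V Adj W)"

text \<open>Second-smallest eigenvalue (the ground state is nondegenerate, so this is
  the next distinct eigenvalue above the ground energy).\<close>
definition spectral_gap :: "'a set \<Rightarrow> ('a \<Rightarrow> 'a \<Rightarrow> bool) \<Rightarrow> ('a \<Rightarrow> real) \<Rightarrow> real" where
  "spectral_gap V Adj W = Min (eigvals V Adj W - {ground_energy V Adj W}) - ground_energy V Adj W"

definition flow :: "'a set \<Rightarrow> ('a \<Rightarrow> 'a \<Rightarrow> bool) \<Rightarrow> ('a \<Rightarrow> real) \<Rightarrow> 'a set \<Rightarrow> real" where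
  "flow V Adj \<psi> S = (\<Sum>(x,y)\<in>{(x,y). x \<in> S \<and> y \<in> V - S \<and> Adj x y}. \<psi> x * \<psi> y)"

definition capacity :: "('a \<Rightarrow> real) \<Rightarrow> 'a set \<Rightarrow> real" where
  "capacity \<psi> S = (\<Sum>x\<in>S. (\<psi> x)\<^sup>2)"

definition Phi_H :: "'a set \<Rightarrow> ('a \<Rightarrow> 'a \<Rightarrow> bool) \<Rightarrow> ('a \<Rightarrow> real) \<Rightarrow> real" where
  "Phi_H V Adj \<psi> = Min ((\<lambda>S. flow V Adj \<psi> S / min (capacity \<psi> S) (capacity \<psi> (V - S)))
      ` {S. S \<noteq> {} \<and> S \<subset> V})"

end

theory Submission
  imports Defs "HOL-Analysis.Analysis"
begin

(* Write f = \<psi> u (the ground state transform). Then H - E acts on u as the Laplacian of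
   the graph with edge weights \<psi>(x) \<psi>(y); its quadratic form is the Dirichlet form
   \<Sum>_{x~y} \<psi>(x) \<psi>(y) (u(x) - u(y))^2, whose Cheeger constant for the vertex weights
   \<psi>(x)^2 is \<Phi>_H. The next eigenvalue is the minimum of the Rayleigh quotient on the
   orthogonal complement of \<psi> (attained by compactness); the function u equal to 1/C_S on an
   optimal cut S and to -1/C_{V-S} off it gives \<gamma> \<le> 2 \<Phi>_H. Conversely, for the positive
   part g = \<psi> v of a second eigenfunction, taken on the side of capacity at most 1/2, the
   coarea formula bounds \<Phi>_H |g|^2 by the variation of v^2, and the AM-GM inequality splits
   this into the Dirichlet energy of g, at most 2 \<gamma> |g|^2, and
   \<Sum>_{x~y} \<psi>(x) \<psi>(y) (v(x) + v(y))^2, at most 4 (-E) |g|^2 because d_x + W(x) \<le> 0.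
   The same inequality d_x + W(x) \<le> 0 makes E negative. *)

lemma linear_coeff_eq_0_if_quadratic_nonneg:
  fixes a b :: real
  assumes "\<And>t. 0 \<le> t * a + t\<^sup>2 * b"
  shows "a = 0"
proof (rule ccontr)
  assume a: "a \<noteq> 0"
  define c where "c = \<bar>b\<bar> + 1"
  have c: "c > 0" by (simp add: c_def)
  define t where "t = - a / c"
  have "t * a + t\<^sup>2 * b \<le> t * a + t\<^sup>2 * \<bar>b\<bar>" by (simp add: mult_left_mono)
  also have "\<dots> = a\<^sup>2 * (\<bar>b\<bar> - c) / c\<^sup>2"
    unfolding t_def using c by (simp add: field_simps power2_eq_square)
  also have "\<dots> = - a\<^sup>2 / c\<^sup>2" by (simp add: c_def)
  also have "\<dots> < 0" using a c by simp
  finally show False using assms by (meson not_le)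
qed

lemma abs_mult_le_scaled_squares:
  fixes a b t :: real
  assumes "t > 0"
  shows "\<bar>a\<bar> * b \<le> t / 2 * a\<^sup>2 + b\<^sup>2 / (2 * t)"
proof -
  have "2 * t * (\<bar>a\<bar> * \<bar>b\<bar>) \<le> t\<^sup>2 * a\<^sup>2 + b\<^sup>2"
    using zero_le_power2[of "t * \<bar>a\<bar> - \<bar>b\<bar>"] by (simp add: power2_eq_square algebra_simps)
  then have "\<bar>a\<bar> * \<bar>b\<bar> \<le> t / 2 * a\<^sup>2 + b\<^sup>2 / (2 * t)"
    using assms by (simp add: field_simps power2_eq_square)
  moreover have "\<bar>a\<bar> * b \<le> \<bar>a\<bar> * \<bar>b\<bar>" by (simp add: mult_left_mono)
  ultimately show ?thesis by linarith
qed

lemma sq_le_of_forall_le_mult_add_div: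
  fixes \<Phi> \<mu> c :: real
  assumes "\<Phi> \<ge> 0" "\<mu> \<ge> 0" "c \<ge> 0"
    and bound: "\<And>t. t > 0 \<Longrightarrow> 2 * \<Phi> \<le> t * \<mu> + 2 * c / t"
  shows "\<Phi>\<^sup>2 \<le> 2 * c * \<mu>"
proof (cases "\<Phi> = 0")
  case True
  then show ?thesis using assms by simp
next
  case False
  then have \<Phi>: "\<Phi> > 0" using assms(1) by simp
  show ?thesis
  proof (cases "\<mu> = 0")
    case True
    have "2 * \<Phi> \<le> 2 * c * \<Phi> / (c + 1)"
      using bound[of "(c + 1) / \<Phi>"] \<Phi> \<open>c \<ge> 0\<close> True by (simp add: field_simps)
    moreover have "2 * c * \<Phi> / (c + 1) < 2 * \<Phi>"
      using \<Phi> \<open>c \<ge> 0\<close> by (simp add: field_simps)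
    ultimately show ?thesis by simp
  next
    case False
    then have "\<mu> > 0" using assms(2) by simp
    then have "2 * \<Phi> \<le> \<Phi> + 2 * c * \<mu> / \<Phi>"
      using bound[of "\<Phi> / \<mu>"] \<Phi> by (simp add: field_simps)
    then show ?thesis using \<Phi> by (simp add: field_simps power2_eq_square)
  qed
qed

lemma
  fixes a b :: real
  shows integrable_indicator_atLeastLessThan: "integrable lborel (indicator {a..<b} :: real \<Rightarrow> real)"
    and integral_indicator_atLeastLessThan:
      "integral\<^sup>L lborel (indicator {a..<b} :: real \<Rightarrow> real) = max (b - a) 0"
  by (cases "a \<le> b"; simp add: integrable_indicator_iff)+

lemma integrable_sum_mult_indicator_atLeastLessThan:
  "integrable lborel (\<lambda>t::real. \<Sum>i\<in>I. c i * indicator {a i..<b i} t :: real)"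
  by (intro Bochner_Integration.integrable_sum integrable_mult_right
      integrable_indicator_atLeastLessThan)

lemma integral_sum_mult_indicator_atLeastLessThan:
  "integral\<^sup>L lborel (\<lambda>t::real. \<Sum>i\<in>I. c i * indicator {a i..<b i} t :: real)
     = (\<Sum>i\<in>I. c i * max (b i - a i) 0)"
proof -
  have "integral\<^sup>L lborel (\<lambda>t::real. \<Sum>i\<in>I. c i * indicator {a i..<b i} t :: real)
      = (\<Sum>i\<in>I. integral\<^sup>L lborel (\<lambda>t. c i * indicator {a i..<b i} t))"
    by (intro Bochner_Integration.integral_sum integrable_mult_right
        integrable_indicator_atLeastLessThan)
  then show ?thesis
    by (simp only: integral_mult_right_zero integral_indicator_atLeastLessThan)
qed

section \<open>Spectrum of a graph Schroedinger operator\<close>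

locale graph_schroedinger =
  fixes V :: "'a set" and Adj :: "'a \<Rightarrow> 'a \<Rightarrow> bool" and W :: "'a \<Rightarrow> real"
  assumes finite_V: "finite V"
    and adj_in_V: "\<And>x y. Adj x y \<Longrightarrow> x \<in> V \<and> y \<in> V"
    and adj_sym: "\<And>x y. Adj x y \<Longrightarrow> Adj y x"
begin

abbreviation H :: "('a \<Rightarrow> real) \<Rightarrow> 'a \<Rightarrow> real" where
  "H \<equiv> Hop V Adj W"

definition nbrs :: "'a \<Rightarrow> 'a set" where
  "nbrs x = {y\<in>V. Adj x y}"

definition dot :: "('a \<Rightarrow> real) \<Rightarrow> ('a \<Rightarrow> real) \<Rightarrow> real" where
  "dot f g = (\<Sum>x\<in>V. f x * g x)"

lemma finite_nbrs [simp]: "finite (nbrs x)"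
  using finite_V by (simp add: nbrs_def)

lemma nbrs_in_V: "y \<in> nbrs x \<Longrightarrow> y \<in> V"
  by (simp add: nbrs_def)

lemma H_eq: "H f x = (real (deg V Adj x) + W x) * f x - (\<Sum>y\<in>nbrs x. f y)"
  by (simp add: Hop_def nbrs_def)

lemma sum_nbrs_swap: "(\<Sum>x\<in>V. \<Sum>y\<in>nbrs x. h x y) = (\<Sum>x\<in>V. \<Sum>y\<in>nbrs x. h y x)"
proof -
  have "(\<Sum>x\<in>V. \<Sum>y\<in>nbrs x. h x y) = (\<Sum>x\<in>V. \<Sum>y\<in>V. if Adj x y then h x y else 0)"
    unfolding nbrs_def using finite_V by (simp add: sum.inter_filter)
  also have "\<dots> = (\<Sum>y\<in>V. \<Sum>x\<in>V. if Adj x y then h x y else 0)"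
    by (rule sum.swap)
  also have "\<dots> = (\<Sum>y\<in>V. \<Sum>x\<in>V. if Adj y x then h x y else 0)"
    by (intro sum.cong refl) (metis adj_sym)
  also have "\<dots> = (\<Sum>x\<in>V. \<Sum>y\<in>nbrs x. h y x)"
    unfolding nbrs_def using finite_V by (simp add: sum.inter_filter)
  finally show ?thesis .
qed

lemma dot_sym: "dot f g = dot g f"
  by (simp add: dot_def mult.commute)

lemma dot_self_nonneg: "dot f f \<ge> 0"
  by (simp add: dot_def sum_nonneg)

lemma dot_self_eq_0D: "dot f f = 0 \<Longrightarrow> x \<in> V \<Longrightarrow> f x = 0"
  unfolding dot_def using sum_nonneg_eq_0_iff[OF finite_V, of "\<lambda>x. f x * f x"] by simp

lemma dot_self_pos: "x \<in> V \<Longrightarrow> f x \<noteq> 0 \<Longrightarrow> dot f f > 0"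
  using dot_self_nonneg[of f] dot_self_eq_0D[of f x] by fastforce

lemma dot_scale: "dot (\<lambda>x. c * f x) (\<lambda>x. c * f x) = c\<^sup>2 * dot f f"
  by (simp add: dot_def sum_distrib_left power2_eq_square algebra_simps)

lemma dot_H_sym: "dot g (H f) = dot f (H g)"
proof -
  have "dot g (H f) = (\<Sum>x\<in>V. (real (deg V Adj x) + W x) * f x * g x)
      - (\<Sum>x\<in>V. \<Sum>y\<in>nbrs x. g x * f y)"
    by (simp add: dot_def H_eq sum_distrib_left sum_subtractf algebra_simps)
  also have "(\<Sum>x\<in>V. \<Sum>y\<in>nbrs x. g x * f y) = (\<Sum>x\<in>V. \<Sum>y\<in>nbrs x. f x * g y)"
    by (subst sum_nbrs_swap) (simp add: mult.commute)
  finally show ?thesis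
    by (simp add: dot_def H_eq sum_distrib_left sum_subtractf algebra_simps)
qed

lemma H_scale: "H (\<lambda>x. c * f x) x = c * H f x"
  by (simp add: H_eq sum_distrib_left algebra_simps)

lemma Hop_Re: "Hop V Adj W (\<lambda>x. Re (f x)) x = Re (Hop V Adj W f x)"
  and Hop_Im: "Hop V Adj W (\<lambda>x. Im (f x)) x = Im (Hop V Adj W f x)"
  and Hop_of_real: "Hop V Adj W (\<lambda>x. complex_of_real (g x)) x = complex_of_real (H g x)"
  by (simp_all add: Hop_def)

text \<open>H has real coefficients, so the real or the imaginary part of a complex
  eigenfunction is a real one.\<close>
lemma eigvals_real_eigenfunction:
  assumes "lam \<in> eigvals V Adj W"
  shows "\<exists>f. (\<exists>x\<in>V. f x \<noteq> 0) \<and> (\<forall>x\<in>V. H f x = lam * f x)"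
proof -
  obtain g :: "'a \<Rightarrow> complex" and x where x: "x \<in> V" "g x \<noteq> 0"
    and g: "\<forall>x\<in>V. Hop V Adj W g x = of_real lam * g x"
    using assms unfolding eigvals_def by blast
  have "Re (g x) \<noteq> 0 \<or> Im (g x) \<noteq> 0"
    using x(2) complex_eqI[of "g x" 0] by auto
  then show ?thesis
  proof
    assume "Re (g x) \<noteq> 0"
    then show ?thesis using g x(1) by (intro exI[of _ "\<lambda>x. Re (g x)"]) (auto simp: Hop_Re)
  next
    assume "Im (g x) \<noteq> 0"
    then show ?thesis using g x(1) by (intro exI[of _ "\<lambda>x. Im (g x)"]) (auto simp: Hop_Im)
  qed
qed

lemma real_eigenfunction_in_eigvals:
  assumes "x \<in> V" "f x \<noteq> 0" "\<forall>x\<in>V. H f x = lam * f x"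
  shows "lam \<in> eigvals V Adj W"
  unfolding eigvals_def
  using assms by (intro CollectI exI[of _ "\<lambda>x. complex_of_real (f x)"]) (auto simp: Hop_of_real)

lemma eigvals_unit_eigenfunction:
  assumes "lam \<in> eigvals V Adj W"
  shows "\<exists>e. dot e e = 1 \<and> (\<forall>x\<in>V. H e x = lam * e x)"
proof -
  obtain f x where f: "x \<in> V" "f x \<noteq> 0" "\<forall>x\<in>V. H f x = lam * f x"
    using eigvals_real_eigenfunction[OF assms] by blast
  define c where "c = 1 / sqrt (dot f f)"
  have "dot (\<lambda>x. c * f x) (\<lambda>x. c * f x) = 1"
    unfolding dot_scale c_def using dot_self_pos[of x f] f(1,2) by (simp add: power_divide)
  moreover have "\<forall>x\<in>V. H (\<lambda>x. c * f x) x = lam * (c * f x)"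
    using f(3) by (simp add: H_scale)
  ultimately show ?thesis by blast
qed

lemma eigenfunctions_orthogonal:
  assumes "\<forall>x\<in>V. H e x = lam * e x" "\<forall>x\<in>V. H e' x = mu * e' x" "lam \<noteq> mu"
  shows "dot e e' = 0"
proof -
  have "mu * dot e e' = dot e (H e')"
    using assms(2) by (simp add: dot_def sum_distrib_left algebra_simps)
  also have "\<dots> = dot e' (H e)" by (rule dot_H_sym)
  also have "\<dots> = lam * dot e e'"
    using assms(1) by (simp add: dot_def sum_distrib_left algebra_simps)
  finally show ?thesis using assms(3) by simp
qed

text \<open>Bessel's inequality for the unit vector at x0.\<close>
lemma orthonormal_sum_sq_le_1:
  assumes "finite L" and unit: "\<And>l. l \<in> L \<Longrightarrow> dot (e l) (e l) = 1"
    and orth: "\<And>l l'. l \<in> L \<Longrightarrow> l' \<in> L \<Longrightarrow> l \<noteq> l' \<Longrightarrow> dot (e l) (e l') = 0"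
    and x0: "x0 \<in> V"
  shows "(\<Sum>l\<in>L. (e l x0)\<^sup>2) \<le> 1"
proof -
  define s where "s x = (\<Sum>l\<in>L. e l x0 * e l x)" for x
  define d where "d x = (if x = x0 then 1 else (0::real))" for x
  have "dot s s = (\<Sum>l\<in>L. \<Sum>l'\<in>L. e l x0 * e l' x0 * dot (e l) (e l'))"
    unfolding s_def dot_def sum_product
    by (subst sum.swap) (simp add: sum_distrib_left algebra_simps, intro sum.cong refl sum.swap)
  also have "\<dots> = (\<Sum>l\<in>L. (e l x0)\<^sup>2)"
  proof (intro sum.cong refl)
    fix l assume l: "l \<in> L"
    have "(\<Sum>l'\<in>L. e l x0 * e l' x0 * dot (e l) (e l'))
        = (\<Sum>l'\<in>L. if l = l' then (e l x0)\<^sup>2 else 0)"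
      by (intro sum.cong refl) (auto simp: unit orth l power2_eq_square)
    then show "(\<Sum>l'\<in>L. e l x0 * e l' x0 * dot (e l) (e l')) = (e l x0)\<^sup>2"
      using l \<open>finite L\<close> by simp
  qed
  finally have ss: "dot s s = (\<Sum>l\<in>L. (e l x0)\<^sup>2)" .
  have dd: "dot d d = 1" and ds: "dot d s = s x0"
    using x0 finite_V by (simp_all add: dot_def d_def if_distrib[of "\<lambda>c. c * _"] cong: if_cong)
  have "0 \<le> dot (\<lambda>x. d x - s x) (\<lambda>x. d x - s x)" by (rule dot_self_nonneg)
  also have "\<dots> = dot d d - 2 * dot d s + dot s s"
    by (simp add: dot_def sum_subtractf sum.distrib sum_distrib_left algebra_simps)
  finally show ?thesis using ss dd ds by (simp add: s_def power2_eq_square)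
qed

lemma card_le_card_V_if_eigvals:
  assumes "finite L" "L \<subseteq> eigvals V Adj W"
  shows "card L \<le> card V"
proof -
  obtain e where e: "\<And>l. l \<in> L \<Longrightarrow> dot (e l) (e l) = 1 \<and> (\<forall>x\<in>V. H (e l) x = l * e l x)"
    using eigvals_unit_eigenfunction assms(2) by (metis subsetD)
  have orth: "dot (e l) (e l') = 0" if "l \<in> L" "l' \<in> L" "l \<noteq> l'" for l l'
    using eigenfunctions_orthogonal e that by blast
  have "real (card L) = (\<Sum>l\<in>L. dot (e l) (e l))" using e by simp
  also have "\<dots> = (\<Sum>x\<in>V. \<Sum>l\<in>L. (e l x)\<^sup>2)"
    unfolding dot_def by (subst sum.swap) (simp add: power2_eq_square)
  also have "\<dots> \<le> (\<Sum>x\<in>V. 1)"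
    by (intro sum_mono orthonormal_sum_sq_le_1[OF assms(1)]) (use e orth in auto)
  finally show ?thesis by simp
qed

lemma finite_eigvals: "finite (eigvals V Adj W)"
proof (rule ccontr)
  assume "infinite (eigvals V Adj W)"
  then obtain L where "finite L" "card L = Suc (card V)" "L \<subseteq> eigvals V Adj W"
    using infinite_arbitrarily_large by blast
  then show False using card_le_card_V_if_eigvals by fastforce
qed

end

section \<open>The ground state transform\<close>

locale ground_state = graph_schroedinger +
  fixes \<psi> :: "'a \<Rightarrow> real" and E :: real
  assumes psi_pos: "\<And>x. x \<in> V \<Longrightarrow> \<psi> x > 0"
    and psi_eigen: "\<And>x. x \<in> V \<Longrightarrow> H \<psi> x = E * \<psi> x"
    and connected: "\<And>x y. x \<in> V \<Longrightarrow> y \<in> V \<Longrightarrow> Adj\<^sup>*\<^sup>* x y"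
begin

definition H_shift :: "('a \<Rightarrow> real) \<Rightarrow> 'a \<Rightarrow> real" where
  "H_shift f x = H f x - E * f x"

definition rel :: "('a \<Rightarrow> real) \<Rightarrow> 'a \<Rightarrow> real" where
  "rel f x = f x / \<psi> x"

definition dirichlet :: "('a \<Rightarrow> real) \<Rightarrow> ('a \<Rightarrow> real) \<Rightarrow> real" where
  "dirichlet g f =
     (\<Sum>x\<in>V. \<Sum>y\<in>nbrs x. \<psi> x * \<psi> y * (rel g x - rel g y) * (rel f x - rel f y))"

lemma psi_mult_psi_pos: "x \<in> V \<Longrightarrow> y \<in> nbrs x \<Longrightarrow> \<psi> x * \<psi> y > 0"
  using psi_pos nbrs_in_V by simp

lemma psi_mult_rel: "x \<in> V \<Longrightarrow> \<psi> x * rel g x = g x"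
  using psi_pos[of x] by (simp add: rel_def)

lemma sum_nbrs_psi: "x \<in> V \<Longrightarrow> (\<Sum>y\<in>nbrs x. \<psi> y) = (real (deg V Adj x) + W x - E) * \<psi> x"
  using psi_eigen[of x] by (simp add: H_eq algebra_simps)

lemma H_shift_eq_rel: "x \<in> V \<Longrightarrow> H_shift f x = (\<Sum>y\<in>nbrs x. \<psi> y * (rel f x - rel f y))"
proof -
  assume x: "x \<in> V"
  have "H_shift f x = (real (deg V Adj x) + W x - E) * \<psi> x * rel f x - (\<Sum>y\<in>nbrs x. f y)"
    using psi_mult_rel[OF x, of f] by (simp add: H_shift_def H_eq algebra_simps)
  also have "\<dots> = (\<Sum>y\<in>nbrs x. \<psi> y) * rel f x - (\<Sum>y\<in>nbrs x. \<psi> y * rel f y)"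
    using sum_nbrs_psi[OF x] psi_mult_rel nbrs_in_V by simp
  finally show ?thesis
    by (simp add: sum_distrib_right sum_subtractf right_diff_distrib)
qed

lemma dot_H_shift_expand:
  "dot g (H_shift f) = (\<Sum>x\<in>V. \<Sum>y\<in>nbrs x. \<psi> x * \<psi> y * rel g x * (rel f x - rel f y))"
  unfolding dot_def
  by (intro sum.cong refl)
     (simp add: H_shift_eq_rel psi_mult_rel[symmetric, of _ g] sum_distrib_left algebra_simps)

lemma dot_H_shift: "dot g (H_shift f) = dirichlet g f / 2"
proof -
  define h where "h x y = \<psi> x * \<psi> y * rel g x * (rel f x - rel f y)" for x y
  have "dirichlet g f = (\<Sum>x\<in>V. \<Sum>y\<in>nbrs x. h x y) + (\<Sum>x\<in>V. \<Sum>y\<in>nbrs x. h y x)"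
    unfolding dirichlet_def h_def sum.distrib[symmetric]
    by (intro sum.cong refl) (simp add: algebra_simps)
  then show ?thesis
    unfolding dot_H_shift_expand h_def[symmetric] sum_nbrs_swap[of h] by simp
qed

lemma dirichlet_sym: "dirichlet g f = dirichlet f g"
  unfolding dirichlet_def by (intro sum.cong refl) (simp add: algebra_simps)

lemma dirichlet_self_term_nonneg:
  "x \<in> V \<Longrightarrow> y \<in> nbrs x \<Longrightarrow> 0 \<le> \<psi> x * \<psi> y * (rel f x - rel f y) * (rel f x - rel f y)"
  using psi_mult_psi_pos[of x y] by (metis mult.assoc mult_nonneg_nonneg zero_le_square less_imp_le)

lemma dirichlet_nonneg: "dirichlet f f \<ge> 0"
  unfolding dirichlet_def by (intro sum_nonneg) (simp add: dirichlet_self_term_nonneg)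

lemma dirichlet_self_eq_0D:
  assumes "dirichlet f f = 0" "x \<in> V" "y \<in> V"
  shows "rel f x = rel f y"
proof -
  have "\<psi> a * \<psi> b * (rel f a - rel f b) * (rel f a - rel f b) = 0" if "a \<in> V" "b \<in> nbrs a" for a b
    using assms(1) that finite_V
    unfolding dirichlet_def
    by (auto simp: sum_nonneg_eq_0_iff sum_nonneg dirichlet_self_term_nonneg)
  then have edge: "rel f a = rel f b" if "Adj a b" for a b
    using that adj_in_V psi_mult_psi_pos[of a b] by (force simp: nbrs_def)
  have "Adj\<^sup>*\<^sup>* x y" using connected assms(2,3) by blast
  then show ?thesis by (induction rule: rtranclp_induct) (auto simp: edge)
qed

lemma dirichlet_psi: "dirichlet \<psi> f = 0"
  unfolding dirichlet_def using psi_pos nbrs_in_V by (intro sum.neutral ballI) (simp add: rel_def)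

lemma rel_add_mult: "rel (\<lambda>x. f x + t * h x) x = rel f x + t * rel h x"
  by (simp add: rel_def add_divide_distrib)

lemma dirichlet_add_mult:
  "dirichlet (\<lambda>x. f x + t * h x) (\<lambda>x. f x + t * h x)
     = dirichlet f f + 2 * t * dirichlet f h + t\<^sup>2 * dirichlet h h"
proof -
  let ?d = "\<lambda>f g x y. \<psi> x * \<psi> y * (rel f x - rel f y) * (rel g x - rel g y)"
  have "dirichlet (\<lambda>x. f x + t * h x) (\<lambda>x. f x + t * h x)
      = (\<Sum>x\<in>V. \<Sum>y\<in>nbrs x. ?d f f x y + 2 * t * ?d f h x y + t\<^sup>2 * ?d h h x y)"
    unfolding dirichlet_def rel_add_mult
    by (intro sum.cong refl) (simp add: power2_eq_square algebra_simps)
  then show ?thesis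
    by (simp add: dirichlet_def sum.distrib sum_distrib_left)
qed

lemma dot_add_mult:
  "dot (\<lambda>x. f x + t * h x) (\<lambda>x. f x + t * h x) = dot f f + 2 * t * dot f h + t\<^sup>2 * dot h h"
  unfolding dot_def by (simp add: sum_distrib_left sum.distrib power2_eq_square algebra_simps)

lemma dot_H_shift_scale: "dot (\<lambda>x. c * f x) (H_shift (\<lambda>x. c * f x)) = c\<^sup>2 * dot f (H_shift f)"
  unfolding dot_H_shift using dirichlet_add_mult[of "\<lambda>x. 0" c f]
  by (simp add: dirichlet_def rel_def)

lemma H_shift_uminus: "H_shift (\<lambda>x. - f x) x = - H_shift f x"
  by (simp add: H_shift_def H_eq sum_negf algebra_simps)

lemma exists_pos_if_dot_psi_eq_0:
  assumes "dot \<psi> f = 0" "x \<in> V" "f x \<noteq> 0"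
  shows "\<exists>y\<in>V. f y > 0"
proof (rule ccontr)
  assume "\<not> (\<exists>y\<in>V. f y > 0)"
  then have nonneg: "\<forall>y\<in>V. 0 \<le> - (\<psi> y * f y)"
    using psi_pos by (metis less_imp_le mult_nonneg_nonpos neg_0_le_iff_le not_less)
  have "(\<Sum>y\<in>V. - (\<psi> y * f y)) = 0" using assms(1) by (simp add: dot_def sum_negf)
  then have "\<psi> x * f x = 0"
    using sum_nonneg_eq_0_iff[OF finite_V, of "\<lambda>y. - (\<psi> y * f y)"] nonneg assms(2) by simp
  then show False using psi_pos[OF assms(2)] assms(3) by simp
qed

lemma dirichlet_pos_part_le:
  assumes "\<forall>x\<in>V. H_shift f x = \<mu> * f x"
  defines "g \<equiv> \<lambda>x. max (f x) 0"
  shows "dirichlet g g \<le> 2 * \<mu> * dot g g"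
proof -
  have rel_g: "rel g x = max (rel f x) 0" if "x \<in> V" for x
    using psi_pos[OF that] by (simp add: g_def rel_def max_divide_distrib_right)
  have "dot g (H_shift f) = \<mu> * dot g g"
    unfolding dot_def sum_distrib_left
    by (intro sum.cong refl) (simp add: assms(1) g_def max_def)
  moreover have "dot g (H_shift g) \<le> dot g (H_shift f)"
    unfolding dot_H_shift_expand
  proof (intro sum_mono)
    fix x y assume x: "x \<in> V" and y: "y \<in> nbrs x"
    have "rel g x * (rel g x - rel g y) \<le> rel g x * (rel f x - rel f y)"
    proof (cases "rel f x \<ge> 0")
      case True
      then show ?thesis
        using rel_g[OF x] rel_g[OF nbrs_in_V[OF y]] by (simp add: mult_left_mono)
    next
      case False
      then show ?thesis using rel_g[OF x] by simp
    qed
    from mult_left_mono[OF this less_imp_le[OF psi_mult_psi_pos[OF x y]]]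
    show "\<psi> x * \<psi> y * rel g x * (rel g x - rel g y) \<le> \<psi> x * \<psi> y * rel g x * (rel f x - rel f y)"
      by (simp add: mult.assoc)
  qed
  ultimately show ?thesis using dot_H_shift[of g g] by simp
qed

lemma sum_nbrs_max_diff_eq:
  "2 * (\<Sum>x\<in>V. \<Sum>y\<in>nbrs x. \<psi> x * \<psi> y * max (s x - s y) 0)
    = (\<Sum>x\<in>V. \<Sum>y\<in>nbrs x. \<psi> x * \<psi> y * \<bar>s x - s y\<bar>)"
proof -
  have "(\<Sum>x\<in>V. \<Sum>y\<in>nbrs x. \<psi> x * \<psi> y * max (s x - s y) 0)
      = (\<Sum>x\<in>V. \<Sum>y\<in>nbrs x. \<psi> x * \<psi> y * max (s y - s x) 0)"
    by (subst sum_nbrs_swap) (simp add: mult.commute)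
  moreover have "(\<Sum>x\<in>V. \<Sum>y\<in>nbrs x. \<psi> x * \<psi> y * max (s x - s y) 0)
      + (\<Sum>x\<in>V. \<Sum>y\<in>nbrs x. \<psi> x * \<psi> y * max (s y - s x) 0)
      = (\<Sum>x\<in>V. \<Sum>y\<in>nbrs x. \<psi> x * \<psi> y * \<bar>s x - s y\<bar>)"
    unfolding sum.distrib[symmetric] distrib_left[symmetric]
    by (intro sum.cong refl) (simp add: max_def abs_if)
  ultimately show ?thesis by simp
qed

lemma sum_nbrs_abs_diff_sq_le:
  assumes "\<And>x. x \<in> V \<Longrightarrow> v x \<ge> 0" "t > 0"
  shows "(\<Sum>x\<in>V. \<Sum>y\<in>nbrs x. \<psi> x * \<psi> y * \<bar>(v x)\<^sup>2 - (v y)\<^sup>2\<bar>)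
    \<le> t / 2 * (\<Sum>x\<in>V. \<Sum>y\<in>nbrs x. \<psi> x * \<psi> y * (v x - v y)\<^sup>2)
      + (\<Sum>x\<in>V. \<Sum>y\<in>nbrs x. \<psi> x * \<psi> y * (v x + v y)\<^sup>2) / (2 * t)"
proof -
  have "\<psi> x * \<psi> y * \<bar>(v x)\<^sup>2 - (v y)\<^sup>2\<bar>
      \<le> t / 2 * (\<psi> x * \<psi> y * (v x - v y)\<^sup>2) + \<psi> x * \<psi> y * (v x + v y)\<^sup>2 / (2 * t)"
    if x: "x \<in> V" and y: "y \<in> nbrs x" for x y
  proof -
    have "(v x)\<^sup>2 - (v y)\<^sup>2 = (v x - v y) * (v x + v y)"
      by (simp add: power2_eq_square algebra_simps)
    then have "\<bar>(v x)\<^sup>2 - (v y)\<^sup>2\<bar> = \<bar>v x - v y\<bar> * (v x + v y)"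
      using assms(1)[OF x] assms(1)[OF nbrs_in_V[OF y]] by (simp add: abs_mult)
    also have "\<dots> \<le> t / 2 * (v x - v y)\<^sup>2 + (v x + v y)\<^sup>2 / (2 * t)"
      by (rule abs_mult_le_scaled_squares[OF assms(2)])
    finally have "\<psi> x * \<psi> y * \<bar>(v x)\<^sup>2 - (v y)\<^sup>2\<bar>
        \<le> \<psi> x * \<psi> y * (t / 2 * (v x - v y)\<^sup>2 + (v x + v y)\<^sup>2 / (2 * t))"
      by (rule mult_left_mono[OF _ less_imp_le[OF psi_mult_psi_pos[OF x y]]])
    then show ?thesis by (simp add: distrib_left mult_ac)
  qed
  then have "(\<Sum>x\<in>V. \<Sum>y\<in>nbrs x. \<psi> x * \<psi> y * \<bar>(v x)\<^sup>2 - (v y)\<^sup>2\<bar>)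
      \<le> (\<Sum>x\<in>V. \<Sum>y\<in>nbrs x. t / 2 * (\<psi> x * \<psi> y * (v x - v y)\<^sup>2)
            + \<psi> x * \<psi> y * (v x + v y)\<^sup>2 / (2 * t))"
    by (intro sum_mono)
  then show ?thesis
    by (simp only: sum.distrib sum_distrib_left sum_divide_distrib)
qed

subsection \<open>The next eigenvalue as a minimum\<close>

definition perp_psi :: "('a \<Rightarrow> real) \<Rightarrow> bool" where
  "perp_psi f \<longleftrightarrow> (\<forall>x. x \<notin> V \<longrightarrow> f x = 0) \<and> dot f \<psi> = 0"

lemma perp_psi_add_mult: "perp_psi f \<Longrightarrow> perp_psi h \<Longrightarrow> perp_psi (\<lambda>x. f x + t * h x)"
  by (simp add: perp_psi_def dot_def sum.distrib algebra_simps sum_distrib_left[symmetric])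

lemma perp_psi_normalise:
  assumes "perp_psi h" "dot h h > 0"
  defines "h' \<equiv> \<lambda>x. (1 / sqrt (dot h h)) * h x"
  shows "perp_psi h'" "dot h' h' = 1"
proof -
  show "perp_psi h'"
    using assms(1) by (simp add: perp_psi_def h'_def dot_def sum_divide_distrib[symmetric])
  show "dot h' h' = 1"
    unfolding h'_def dot_scale using assms(2) by (simp add: power_divide)
qed

lemma unit_abs_le_1: "dot f f = 1 \<Longrightarrow> x \<in> V \<Longrightarrow> \<bar>f x\<bar> \<le> 1"
  using member_le_sum[of x V "\<lambda>x. f x * f x"] finite_V abs_le_square_iff[of "f x" 1]
  by (simp add: dot_def power2_eq_square)

lemma exists_energy_minimiser:
  assumes "perp_psi g" "dot g g > 0"
  obtains f0 where "perp_psi f0" "dot f0 f0 = 1"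
    "\<And>h. perp_psi h \<Longrightarrow> dot f0 (H_shift f0) * dot h h \<le> dot h (H_shift h)"
proof -
  define K where "K = PiE UNIV (\<lambda>x. if x \<in> V then {-1..1} else {0::real})
    \<inter> {f. perp_psi f \<and> dot f f = 1}"
  have [continuous_intros]: "continuous_on S (\<lambda>f::'a \<Rightarrow> real. f x)" for x S
    by (rule continuous_on_subset[OF continuous_on_product_coordinates]) simp
  have "compactin (product_topology (\<lambda>i. euclidean) UNIV)
      (PiE UNIV (\<lambda>x. if x \<in> V then {-1..1} else {0::real}))"
    by (subst compactin_PiE) auto
  moreover have "{f. perp_psi f \<and> dot f f = 1}
      = (\<Inter>x\<in>-V. {f. f x = 0}) \<inter> {f. dot f \<psi> = 0} \<inter> {f. dot f f = 1}"
    by (auto simp: perp_psi_def)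
  moreover have "closed \<dots>"
    by (intro closed_Int closed_INT ballI closed_Collect_eq) (auto simp: dot_def intro!: continuous_intros)
  ultimately have "compact K"
    unfolding K_def by (intro compact_Int_closed) (auto simp: euclidean_product_topology)
  have inK: "f \<in> K" if "perp_psi f" "dot f f = 1" for f
    using that unit_abs_le_1[of f] by (auto simp: K_def PiE_iff perp_psi_def abs_le_iff)
  have "K \<noteq> {}" using inK perp_psi_normalise[OF assms] by blast
  moreover have "continuous_on K (\<lambda>f. dot f (H_shift f))"
    unfolding dot_def H_shift_def Hop_def by (intro continuous_intros)
  ultimately obtain f0 where "f0 \<in> K" and min: "\<And>f. f \<in> K \<Longrightarrow> dot f0 (H_shift f0) \<le> dot f (H_shift f)"
    using continuous_attains_inf[OF \<open>compact K\<close>] by blast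
  have "dot f0 (H_shift f0) * dot h h \<le> dot h (H_shift h)" if h: "perp_psi h" for h
  proof (cases "dot h h = 0")
    case True
    then show ?thesis using dot_H_shift[of h h] dirichlet_nonneg[of h] by simp
  next
    case False
    then have pos: "dot h h > 0" using dot_self_nonneg[of h] by linarith
    have "dot f0 (H_shift f0) \<le> (1 / sqrt (dot h h))\<^sup>2 * dot h (H_shift h)"
      using min[OF inK[OF perp_psi_normalise[OF h pos]]] by (simp only: dot_H_shift_scale)
    then show ?thesis using pos by (simp add: power_divide field_simps)
  qed
  then show ?thesis using that \<open>f0 \<in> K\<close> by (auto simp: K_def)
qed

text \<open>The Lagrange condition: the first variation of the energy at the minimiser vanishes
  in every admissible direction, and the residual H_shift f0 - m f0 is itself admissible.\<close>
lemma energy_minimiser_eigenfunction: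
  assumes f0: "perp_psi f0" "dot f0 f0 = 1"
    and min: "\<And>h. perp_psi h \<Longrightarrow> dot f0 (H_shift f0) * dot h h \<le> dot h (H_shift h)"
  shows "\<forall>x\<in>V. H_shift f0 x = dot f0 (H_shift f0) * f0 x"
proof -
  define m where "m = dot f0 (H_shift f0)"
  have first_variation: "dirichlet f0 h = 2 * m * dot f0 h" if h: "perp_psi h" for h
  proof -
    have "dirichlet f0 h - 2 * m * dot f0 h = 0"
    proof (rule linear_coeff_eq_0_if_quadratic_nonneg)
      fix t
      have "m * dot (\<lambda>x. f0 x + t * h x) (\<lambda>x. f0 x + t * h x)
          \<le> dirichlet (\<lambda>x. f0 x + t * h x) (\<lambda>x. f0 x + t * h x) / 2"
        using min[OF perp_psi_add_mult[OF f0(1) h]] unfolding m_def dot_H_shift .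
      moreover have "dirichlet f0 f0 = 2 * m" using dot_H_shift[of f0 f0] by (simp add: m_def)
      ultimately show "0 \<le> t * (dirichlet f0 h - 2 * m * dot f0 h)
          + t\<^sup>2 * (dirichlet h h / 2 - m * dot h h)"
        using f0(2) by (simp add: dirichlet_add_mult dot_add_mult algebra_simps)
    qed
    then show ?thesis by simp
  qed
  define r where "r x = (if x \<in> V then H_shift f0 x - m * f0 x else 0)" for x
  have "dot \<psi> (H_shift f0) = 0" using dot_H_shift[of \<psi> f0] dirichlet_psi by simp
  then have "perp_psi r"
    using f0(1) unfolding perp_psi_def r_def
    by (auto simp: dot_def sum_subtractf algebra_simps sum_distrib_left[symmetric] cong: sum.cong)
  have "dot r (H_shift f0) = m * dot r f0"
    using dot_H_shift[of r f0] first_variation[OF \<open>perp_psi r\<close>] dirichlet_sym[of r f0] dot_sym[of r f0]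
    by simp
  moreover have "dot r r = dot r (H_shift f0) - m * dot r f0"
    unfolding dot_def sum_distrib_left sum_subtractf[symmetric]
    by (intro sum.cong refl) (simp add: r_def algebra_simps)
  ultimately have "dot r r = 0" by simp
  then show ?thesis using dot_self_eq_0D[of r] by (auto simp: r_def m_def)
qed

lemma dirichlet_pos_if_perp_psi:
  assumes "perp_psi f" "x \<in> V" "f x \<noteq> 0"
  shows "dirichlet f f > 0"
proof -
  have "dirichlet f f \<noteq> 0"
  proof
    assume "dirichlet f f = 0"
    then have f: "f y = rel f x * \<psi> y" if "y \<in> V" for y
      using dirichlet_self_eq_0D[OF \<open>dirichlet f f = 0\<close> that assms(2)] psi_mult_rel[OF that, of f]
      by (simp add: mult.commute)
    have "dot f \<psi> = rel f x * dot \<psi> \<psi>"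
      by (simp add: dot_def f sum_distrib_left algebra_simps cong: sum.cong)
    moreover have "dot \<psi> \<psi> > 0" using dot_self_pos[OF assms(2), of \<psi>] psi_pos[OF assms(2)] by simp
    ultimately have "rel f x = 0" using assms(1) by (simp add: perp_psi_def)
    then show False using f[OF assms(2)] assms(3) by simp
  qed
  then show ?thesis using dirichlet_nonneg[of f] by simp
qed

lemma exists_eigval_le_rayleigh:
  assumes "perp_psi g" "dot g g > 0"
  shows "\<exists>lam\<in>eigvals V Adj W - {E}. lam - E \<le> dot g (H_shift g) / dot g g"
proof -
  obtain f0 where f0: "perp_psi f0" "dot f0 f0 = 1"
    and min: "\<And>h. perp_psi h \<Longrightarrow> dot f0 (H_shift f0) * dot h h \<le> dot h (H_shift h)"
    using exists_energy_minimiser[OF assms] by blast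
  define m where "m = dot f0 (H_shift f0)"
  have "\<exists>x\<in>V. f0 x \<noteq> 0"
  proof (rule ccontr)
    assume "\<not> (\<exists>x\<in>V. f0 x \<noteq> 0)"
    then have "dot f0 f0 = 0" by (simp add: dot_def)
    then show False using f0(2) by simp
  qed
  then obtain x where x: "x \<in> V" "f0 x \<noteq> 0" by blast
  have "\<forall>x\<in>V. H f0 x = (E + m) * f0 x"
    using energy_minimiser_eigenfunction[OF f0 min] by (simp add: H_shift_def m_def algebra_simps)
  then have "E + m \<in> eigvals V Adj W" using real_eigenfunction_in_eigvals x by blast
  moreover have "m > 0"
    using dirichlet_pos_if_perp_psi[OF f0(1) x] dot_H_shift[of f0 f0] by (simp add: m_def)
  moreover have "m \<le> dot g (H_shift g) / dot g g"
    using min[OF assms(1)] assms(2) by (simp add: m_def field_simps)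
  ultimately show ?thesis by (intro bexI[of _ "E + m"]) auto
qed

end

section \<open>Cheeger inequalities for the ground state\<close>

locale cheeger_setting = ground_state +
  assumes two_vertices: "card V \<ge> 2"
    and psi_normalised: "(\<Sum>x\<in>V. (\<psi> x)\<^sup>2) = 1"
    and potential_le: "\<And>x. x \<in> V \<Longrightarrow> W x \<le> - real (max_deg V Adj)"
begin

lemma exists_two_vertices: obtains x y where "x \<in> V" "y \<in> V" "x \<noteq> y"
proof -
  obtain x where x: "x \<in> V" using two_vertices by fastforce
  have "card (V - {x}) \<ge> 1" using two_vertices x finite_V by simp
  then obtain y where "y \<in> V - {x}" by (metis all_not_in_conv card.empty not_one_le_zero)
  then show ?thesis using that x by blast
qed

lemma exists_edge: obtains x y where "Adj x y"
proof -
  obtain x y where "x \<in> V" "y \<in> V" "x \<noteq> y" by (rule exists_two_vertices)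
  then have "Adj\<^sup>*\<^sup>* x y" "x \<noteq> y" using connected by auto
  then show ?thesis using that by (metis converse_rtranclpE)
qed

lemma diagonal_nonpos: "x \<in> V \<Longrightarrow> real (deg V Adj x) + W x \<le> 0"
proof -
  assume x: "x \<in> V"
  then have "deg V Adj x \<le> max_deg V Adj" unfolding max_deg_def using finite_V by simp
  then show ?thesis using potential_le[OF x] by linarith
qed

text \<open>In \<open>\<langle>\<psi>, H \<psi>\<rangle>\<close> the diagonal part is nonpositive by the bound on W, and the
  hopping part is strictly negative since \<psi> > 0 and there is an edge.\<close>
lemma ground_energy_neg: "E < 0"
proof -
  have "E = dot \<psi> (H \<psi>)"
    using psi_normalised psi_eigen by (simp add: dot_def power2_eq_square sum_distrib_left[symmetric] algebra_simps)
  also have "\<dots> = (\<Sum>x\<in>V. (real (deg V Adj x) + W x) * (\<psi> x)\<^sup>2) - (\<Sum>x\<in>V. \<Sum>y\<in>nbrs x. \<psi> x * \<psi> y)"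
    by (simp add: dot_def H_eq sum_subtractf sum_distrib_left power2_eq_square algebra_simps)
  finally have E: "E = \<dots>" .
  have "(\<Sum>x\<in>V. (real (deg V Adj x) + W x) * (\<psi> x)\<^sup>2) \<le> 0"
    by (intro sum_nonpos) (simp add: diagonal_nonpos mult_nonpos_nonneg)
  moreover have "(\<Sum>x\<in>V. \<Sum>y\<in>nbrs x. \<psi> x * \<psi> y) > 0"
  proof -
    obtain x y where "Adj x y" by (rule exists_edge)
    then have xy: "x \<in> V" "y \<in> nbrs x" using adj_in_V by (auto simp: nbrs_def)
    have nonneg: "\<forall>a\<in>V. 0 \<le> (\<Sum>b\<in>nbrs a. \<psi> a * \<psi> b)"
      using psi_mult_psi_pos by (meson less_imp_le sum_nonneg)
    have "(\<Sum>b\<in>nbrs x. \<psi> x * \<psi> b) > 0"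
      using psi_mult_psi_pos xy by (intro sum_pos2[OF finite_nbrs xy(2)]) (auto intro: less_imp_le)
    then show ?thesis using nonneg by (intro sum_pos2[OF finite_V xy(1)]) auto
  qed
  ultimately show ?thesis using E by linarith
qed

definition cuts :: "'a set set" where
  "cuts = {S. S \<noteq> {} \<and> S \<subset> V}"

definition cut_ratio :: "'a set \<Rightarrow> real" where
  "cut_ratio S = flow V Adj \<psi> S / min (capacity \<psi> S) (capacity \<psi> (V - S))"

lemma Phi_H_eq: "Phi_H V Adj \<psi> = Min (cut_ratio ` cuts)"
  by (simp add: Phi_H_def cut_ratio_def cuts_def)

lemma finite_cuts: "finite cuts"
  using finite_V by (auto simp: cuts_def intro: finite_subset[of _ "Pow V"])

lemma cuts_nonempty: "cuts \<noteq> {}"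
proof -
  obtain x y where "x \<in> V" "y \<in> V" "x \<noteq> y" by (rule exists_two_vertices)
  then have "{x} \<in> cuts" by (auto simp: cuts_def)
  then show ?thesis by blast
qed

lemma Phi_H_le: "S \<in> cuts \<Longrightarrow> Phi_H V Adj \<psi> \<le> cut_ratio S"
  unfolding Phi_H_eq using finite_cuts by simp

lemma Phi_H_attained: obtains S where "S \<in> cuts" "Phi_H V Adj \<psi> = cut_ratio S"
  using Min_in[of "cut_ratio ` cuts"] finite_cuts cuts_nonempty unfolding Phi_H_eq by blast

lemma capacity_pos: "S \<subseteq> V \<Longrightarrow> S \<noteq> {} \<Longrightarrow> capacity \<psi> S > 0"
  unfolding capacity_def using finite_V psi_pos
  by (intro sum_pos) (auto intro: finite_subset dest!: less_imp_neq[symmetric])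

lemma cuts_capacity_pos:
  assumes "S \<in> cuts"
  shows "S \<subseteq> V" "capacity \<psi> S > 0" "capacity \<psi> (V - S) > 0"
  using assms capacity_pos[of S] capacity_pos[of "V - S"] by (auto simp: cuts_def)

lemma capacity_Diff: "S \<subseteq> V \<Longrightarrow> capacity \<psi> (V - S) = 1 - capacity \<psi> S"
  unfolding capacity_def using psi_normalised finite_V by (simp add: sum_diff finite_subset)

lemma flow_eq_sum_nbrs:
  assumes "S \<subseteq> V"
  shows "flow V Adj \<psi> S = (\<Sum>x\<in>V. \<Sum>y\<in>nbrs x. if x \<in> S \<and> y \<notin> S then \<psi> x * \<psi> y else 0)"
proof -
  have "{(x,y). x \<in> S \<and> y \<in> V - S \<and> Adj x y} = Sigma S (\<lambda>x. {y\<in>nbrs x. y \<notin> S})"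
    by (auto simp: nbrs_def)
  then have "flow V Adj \<psi> S = (\<Sum>x\<in>S. \<Sum>y\<in>{y\<in>nbrs x. y \<notin> S}. \<psi> x * \<psi> y)"
    unfolding flow_def using assms finite_V by (subst sum.Sigma) (auto intro: finite_subset)
  also have "\<dots> = (\<Sum>x\<in>S. \<Sum>y\<in>nbrs x. if y \<notin> S then \<psi> x * \<psi> y else 0)"
    by (rule sum.cong[OF refl], rule sum.inter_filter[OF finite_nbrs])
  also have "\<dots> = (\<Sum>x\<in>{x\<in>V. x \<in> S}. \<Sum>y\<in>nbrs x. if y \<notin> S then \<psi> x * \<psi> y else 0)"
    using assms by (simp add: Int_absorb1 flip: Int_def)
  also have "\<dots> = (\<Sum>x\<in>V. if x \<in> S then \<Sum>y\<in>nbrs x. if y \<notin> S then \<psi> x * \<psi> y else 0 else 0)"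
    by (rule sum.inter_filter[OF finite_V])
  also have "\<dots> = (\<Sum>x\<in>V. \<Sum>y\<in>nbrs x. if x \<in> S \<and> y \<notin> S then \<psi> x * \<psi> y else 0)"
    by (intro sum.cong refl) auto
  finally show ?thesis .
qed

lemma flow_nonneg: "S \<subseteq> V \<Longrightarrow> flow V Adj \<psi> S \<ge> 0"
  unfolding flow_eq_sum_nbrs using psi_mult_psi_pos by (intro sum_nonneg) (auto intro: less_imp_le)

lemma Phi_H_nonneg: "Phi_H V Adj \<psi> \<ge> 0"
proof -
  obtain S where S: "S \<in> cuts" "Phi_H V Adj \<psi> = cut_ratio S" by (rule Phi_H_attained)
  then show ?thesis
    using cuts_capacity_pos[OF S(1)] flow_nonneg[of S] by (simp add: cut_ratio_def)
qed

lemma sum_split_cut: "S \<subseteq> V \<Longrightarrow> (\<Sum>x\<in>V. h x) = (\<Sum>x\<in>S. h x) + (\<Sum>x\<in>V - S. h x)"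
  using sum.subset_diff[of S V h] finite_V by (simp add: add.commute)

text \<open>\<psi> times the function that is 1 / C_S on S and -1 / C_{V-S} off it; the two values are
  chosen so that the result is orthogonal to \<psi>.\<close>
definition cut_test :: "'a set \<Rightarrow> 'a \<Rightarrow> real" where
  "cut_test S x = (if x \<in> S then \<psi> x / capacity \<psi> S
     else if x \<in> V then - \<psi> x / capacity \<psi> (V - S) else 0)"

lemma perp_psi_cut_test:
  assumes "S \<in> cuts"
  shows "perp_psi (cut_test S)"
proof -
  have S: "S \<subseteq> V" "capacity \<psi> S > 0" "capacity \<psi> (V - S) > 0"
    using cuts_capacity_pos[OF assms] by auto
  have "dot (cut_test S) \<psi>
      = (\<Sum>x\<in>S. (\<psi> x)\<^sup>2) / capacity \<psi> S - (\<Sum>x\<in>V - S. (\<psi> x)\<^sup>2) / capacity \<psi> (V - S)"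
    unfolding dot_def sum_split_cut[OF S(1)] sum_divide_distrib
    by (simp add: cut_test_def power2_eq_square sum_negf)
  then show ?thesis
    using S by (auto simp: perp_psi_def cut_test_def simp flip: capacity_def)
qed

lemma dot_cut_test:
  assumes "S \<in> cuts"
  shows "dot (cut_test S) (cut_test S) = 1 / capacity \<psi> S + 1 / capacity \<psi> (V - S)"
proof -
  have S: "S \<subseteq> V" "capacity \<psi> S > 0" "capacity \<psi> (V - S) > 0"
    using cuts_capacity_pos[OF assms] by auto
  have "dot (cut_test S) (cut_test S)
      = (\<Sum>x\<in>S. (\<psi> x)\<^sup>2) / (capacity \<psi> S)\<^sup>2 + (\<Sum>x\<in>V - S. (\<psi> x)\<^sup>2) / (capacity \<psi> (V - S))\<^sup>2"
    unfolding dot_def sum_split_cut[OF S(1)] sum_divide_distrib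
    by (simp add: cut_test_def power2_eq_square)
  also have "\<dots> = capacity \<psi> S / (capacity \<psi> S)\<^sup>2 + capacity \<psi> (V - S) / (capacity \<psi> (V - S))\<^sup>2"
    by (simp only: capacity_def)
  finally show ?thesis
    using S by (simp add: power2_eq_square)
qed

lemma dirichlet_cut_test:
  assumes "S \<in> cuts"
  shows "dirichlet (cut_test S) (cut_test S)
    = 2 * (1 / capacity \<psi> S + 1 / capacity \<psi> (V - S))\<^sup>2 * flow V Adj \<psi> S"
proof -
  define a where "a = capacity \<psi> S"
  define b where "b = capacity \<psi> (V - S)"
  have S: "S \<subseteq> V" and a: "a > 0" and b: "b > 0"
    using cuts_capacity_pos[OF assms] by (auto simp: a_def b_def)
  have rel_g: "rel (cut_test S) x = (if x \<in> S then 1 / a else - 1 / b)" if "x \<in> V" for x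
    using psi_pos[OF that] that by (simp add: cut_test_def rel_def a_def b_def)
  let ?cross = "\<lambda>x y. if x \<in> S \<and> y \<notin> S then \<psi> x * \<psi> y else 0"
  have "dirichlet (cut_test S) (cut_test S)
      = (\<Sum>x\<in>V. \<Sum>y\<in>nbrs x. (1 / a + 1 / b)\<^sup>2 * (?cross x y + ?cross y x))"
    unfolding dirichlet_def
  proof (intro sum.cong refl)
    fix x y assume "x \<in> V" "y \<in> nbrs x"
    then have "x \<in> V" "y \<in> V" using nbrs_in_V by auto
    then show "\<psi> x * \<psi> y * (rel (cut_test S) x - rel (cut_test S) y)
        * (rel (cut_test S) x - rel (cut_test S) y) = (1 / a + 1 / b)\<^sup>2 * (?cross x y + ?cross y x)"
      using a b by (cases "x \<in> S"; cases "y \<in> S") (simp_all add: rel_g power2_eq_square field_simps)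
  qed
  also have "\<dots> = (1 / a + 1 / b)\<^sup>2 * ((\<Sum>x\<in>V. \<Sum>y\<in>nbrs x. ?cross x y)
      + (\<Sum>x\<in>V. \<Sum>y\<in>nbrs x. ?cross y x))"
    by (simp only: sum_distrib_left sum.distrib distrib_left)
  also have "\<dots> = 2 * (1 / a + 1 / b)\<^sup>2 * flow V Adj \<psi> S"
    unfolding flow_eq_sum_nbrs[OF S] sum_nbrs_swap[of ?cross, symmetric] by simp
  finally show ?thesis by (simp add: a_def b_def)
qed

lemma rayleigh_cut_test_le:
  assumes "S \<in> cuts"
  shows "dot (cut_test S) (H_shift (cut_test S)) / dot (cut_test S) (cut_test S) \<le> 2 * cut_ratio S"
proof -
  define a where "a = capacity \<psi> S"
  define b where "b = capacity \<psi> (V - S)"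
  have S: "S \<subseteq> V" and a: "a > 0" and b: "b > 0"
    using cuts_capacity_pos[OF assms] by (auto simp: a_def b_def)
  have "dot (cut_test S) (H_shift (cut_test S)) / dot (cut_test S) (cut_test S)
      = (1 / a + 1 / b) * flow V Adj \<psi> S"
    unfolding dot_H_shift dirichlet_cut_test[OF assms] dot_cut_test[OF assms] a_def[symmetric]
      b_def[symmetric]
    using a b by (simp add: power2_eq_square)
  also have "\<dots> \<le> 2 / min a b * flow V Adj \<psi> S"
  proof -
    have "1 / a \<le> 1 / min a b" "1 / b \<le> 1 / min a b"
      using a b by (auto intro: divide_left_mono)
    then show ?thesis using flow_nonneg[OF S] by (intro mult_right_mono) auto
  qed
  also have "\<dots> = 2 * cut_ratio S" by (simp add: cut_ratio_def a_def b_def)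
  finally show ?thesis .
qed

lemma exists_eigval_gap_le_2Phi_H: "\<exists>lam\<in>eigvals V Adj W - {E}. lam - E \<le> 2 * Phi_H V Adj \<psi>"
proof -
  obtain S where S: "S \<in> cuts" and Phi: "Phi_H V Adj \<psi> = cut_ratio S" by (rule Phi_H_attained)
  have "dot (cut_test S) (cut_test S) > 0"
    using dot_cut_test[OF S] cuts_capacity_pos[OF S] by (simp add: add_pos_pos)
  then obtain lam where lam: "lam \<in> eigvals V Adj W - {E}"
    and "lam - E \<le> dot (cut_test S) (H_shift (cut_test S)) / dot (cut_test S) (cut_test S)"
    using exists_eigval_le_rayleigh[OF perp_psi_cut_test[OF S]] by blast
  then have "lam - E \<le> 2 * Phi_H V Adj \<psi>" using rayleigh_cut_test_le[OF S] Phi by linarith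
  then show ?thesis using lam by blast
qed


lemma Phi_H_mult_capacity_le_flow:
  assumes "S \<subseteq> V" "V - S \<noteq> {}" "capacity \<psi> S \<le> 1/2"
  shows "Phi_H V Adj \<psi> * capacity \<psi> S \<le> flow V Adj \<psi> S"
proof (cases "S = {}")
  case True
  then show ?thesis by (simp add: capacity_def flow_def)
next
  case False
  then have "S \<in> cuts" using assms(1,2) by (auto simp: cuts_def)
  moreover have "min (capacity \<psi> S) (capacity \<psi> (V - S)) = capacity \<psi> S"
    using capacity_Diff[OF assms(1)] assms(3) by simp
  ultimately have "Phi_H V Adj \<psi> \<le> flow V Adj \<psi> S / capacity \<psi> S"
    using Phi_H_le unfolding cut_ratio_def by metis
  then show ?thesis using capacity_pos[OF assms(1) False] by (simp add: pos_le_divide_eq)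
qed

lemma Phi_H_mult_level_capacity_le_level_flow:
  fixes s :: "'a \<Rightarrow> real"
  assumes zero: "z \<in> V" "s z = 0"
    and small: "capacity \<psi> {x\<in>V. s x > 0} \<le> 1/2"
  shows "Phi_H V Adj \<psi> * (\<Sum>x\<in>V. (\<psi> x)\<^sup>2 * indicator {0..<s x} t)
    \<le> (\<Sum>x\<in>V. \<Sum>y\<in>nbrs x. \<psi> x * \<psi> y * indicator {s y..<s x} t)"
proof (cases "t < 0")
  case True
  then have "(\<Sum>x\<in>V. (\<psi> x)\<^sup>2 * indicator {0..<s x} t) = 0"
    by (simp add: indicator_def)
  moreover have "(\<Sum>x\<in>V. \<Sum>y\<in>nbrs x. \<psi> x * \<psi> y * indicator {s y..<s x} t) \<ge> 0"
    using psi_mult_psi_pos by (intro sum_nonneg) (simp add: less_imp_le)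
  ultimately show ?thesis by simp
next
  case False
  define L where "L = {x\<in>V. t < s x}"
  have L_V: "L \<subseteq> V" by (auto simp: L_def)
  have "(\<Sum>x\<in>V. (\<psi> x)\<^sup>2 * indicator {0..<s x} t) = capacity \<psi> L"
    unfolding capacity_def L_def using False finite_V
    by (simp add: indicator_def sum.inter_filter[symmetric] Int_def cong: sum.cong)
  moreover have "(\<Sum>x\<in>V. \<Sum>y\<in>nbrs x. \<psi> x * \<psi> y * indicator {s y..<s x} t) = flow V Adj \<psi> L"
    unfolding flow_eq_sum_nbrs[OF L_V]
    by (intro sum.cong refl) (simp add: L_def indicator_def nbrs_in_V not_less)
  moreover have "capacity \<psi> L \<le> 1/2"
  proof -
    have "capacity \<psi> L \<le> capacity \<psi> {x\<in>V. s x > 0}"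
      unfolding capacity_def L_def using False finite_V by (intro sum_mono2) auto
    then show ?thesis using small by linarith
  qed
  moreover have "V - L \<noteq> {}" using zero False by (auto simp: L_def)
  ultimately show ?thesis using Phi_H_mult_capacity_le_flow[OF L_V] by simp
qed

text \<open>Coarea formula: integrated over the threshold t, the two sides of the previous lemma
  become the two sides of this one.\<close>
lemma Phi_H_mult_sum_le_sum_nbrs_max_diff:
  assumes nonneg: "\<And>x. x \<in> V \<Longrightarrow> s x \<ge> 0" and zero: "z \<in> V" "s z = 0"
    and small: "capacity \<psi> {x\<in>V. s x > 0} \<le> 1/2"
  shows "Phi_H V Adj \<psi> * (\<Sum>x\<in>V. (\<psi> x)\<^sup>2 * s x)
    \<le> (\<Sum>x\<in>V. \<Sum>y\<in>nbrs x. \<psi> x * \<psi> y * max (s x - s y) 0)"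
proof -
  define flow_at where "flow_at t = (\<Sum>x\<in>V. \<Sum>y\<in>nbrs x. \<psi> x * \<psi> y * indicator {s y..<s x} t)"
    for t :: real
  define cap_at where "cap_at t = (\<Sum>x\<in>V. (\<psi> x)\<^sup>2 * indicator {0..<s x} t)" for t :: real
  have "integral\<^sup>L lborel flow_at
      = (\<Sum>x\<in>V. integral\<^sup>L lborel (\<lambda>t. \<Sum>y\<in>nbrs x. \<psi> x * \<psi> y * indicator {s y..<s x} t))"
    unfolding flow_at_def
    by (intro Bochner_Integration.integral_sum integrable_sum_mult_indicator_atLeastLessThan)
  then have "integral\<^sup>L lborel flow_at = (\<Sum>x\<in>V. \<Sum>y\<in>nbrs x. \<psi> x * \<psi> y * max (s x - s y) 0)"
    by (simp only: integral_sum_mult_indicator_atLeastLessThan)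
  moreover have "integral\<^sup>L lborel cap_at = (\<Sum>x\<in>V. (\<psi> x)\<^sup>2 * s x)"
    unfolding cap_at_def integral_sum_mult_indicator_atLeastLessThan using nonneg by simp
  moreover have "integral\<^sup>L lborel (\<lambda>t. Phi_H V Adj \<psi> * cap_at t) \<le> integral\<^sup>L lborel flow_at"
  proof (intro integral_mono)
    show "integrable lborel flow_at" "integrable lborel (\<lambda>t. Phi_H V Adj \<psi> * cap_at t)"
      unfolding flow_at_def cap_at_def
      by (intro Bochner_Integration.integrable_sum integrable_mult_right
          integrable_sum_mult_indicator_atLeastLessThan)+
    show "Phi_H V Adj \<psi> * cap_at t \<le> flow_at t" for t
      unfolding flow_at_def cap_at_def
      by (rule Phi_H_mult_level_capacity_le_level_flow[OF zero small])
  qed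
  ultimately show ?thesis by simp
qed

lemma sum_nbrs_rel_add_sq_le:
  "(\<Sum>x\<in>V. \<Sum>y\<in>nbrs x. \<psi> x * \<psi> y * (rel g x + rel g y)\<^sup>2) \<le> 4 * (- E) * dot g g"
proof -
  have "(\<Sum>x\<in>V. \<Sum>y\<in>nbrs x. \<psi> x * \<psi> y * (rel g x + rel g y)\<^sup>2)
      \<le> (\<Sum>x\<in>V. \<Sum>y\<in>nbrs x. 2 * (\<psi> x * \<psi> y * (rel g x)\<^sup>2) + 2 * (\<psi> y * \<psi> x * (rel g y)\<^sup>2))"
  proof (intro sum_mono)
    fix x y assume "x \<in> V" "y \<in> nbrs x"
    have "(rel g x + rel g y)\<^sup>2 \<le> 2 * (rel g x)\<^sup>2 + 2 * (rel g y)\<^sup>2"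
      using zero_le_power2[of "rel g x - rel g y"] by (simp add: power2_eq_square algebra_simps)
    from mult_left_mono[OF this less_imp_le[OF psi_mult_psi_pos[OF \<open>x \<in> V\<close> \<open>y \<in> nbrs x\<close>]]]
    show "\<psi> x * \<psi> y * (rel g x + rel g y)\<^sup>2
        \<le> 2 * (\<psi> x * \<psi> y * (rel g x)\<^sup>2) + 2 * (\<psi> y * \<psi> x * (rel g y)\<^sup>2)"
      by (simp add: algebra_simps)
  qed
  also have "\<dots> = 4 * (\<Sum>x\<in>V. \<Sum>y\<in>nbrs x. \<psi> x * \<psi> y * (rel g x)\<^sup>2)"
    by (simp only: sum.distrib sum_distrib_left[symmetric] sum_nbrs_swap[of "\<lambda>y x. \<psi> x * \<psi> y * (rel g x)\<^sup>2"])
  also have "(\<Sum>x\<in>V. \<Sum>y\<in>nbrs x. \<psi> x * \<psi> y * (rel g x)\<^sup>2)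
      = (\<Sum>x\<in>V. (real (deg V Adj x) + W x - E) * (g x)\<^sup>2)"
  proof (intro sum.cong refl)
    fix x assume x: "x \<in> V"
    have "(\<Sum>y\<in>nbrs x. \<psi> x * \<psi> y * (rel g x)\<^sup>2) = (\<Sum>y\<in>nbrs x. \<psi> y) * (\<psi> x * (rel g x)\<^sup>2)"
      by (simp only: sum_distrib_right) (simp only: mult_ac)
    also have "\<dots> = (real (deg V Adj x) + W x - E) * (\<psi> x * rel g x)\<^sup>2"
      by (simp add: sum_nbrs_psi[OF x] power2_eq_square mult_ac)
    finally show "(\<Sum>y\<in>nbrs x. \<psi> x * \<psi> y * (rel g x)\<^sup>2) = (real (deg V Adj x) + W x - E) * (g x)\<^sup>2"
      by (simp add: psi_mult_rel[OF x])
  qed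
  also have "\<dots> \<le> (\<Sum>x\<in>V. (- E) * (g x)\<^sup>2)"
    by (intro sum_mono mult_right_mono) (simp_all add: diagonal_nonpos)
  finally show ?thesis by (simp add: dot_def sum_distrib_left power2_eq_square mult.assoc)
qed

lemma Phi_H_mult_dot_le_variation:
  assumes nonneg: "\<And>x. x \<in> V \<Longrightarrow> g x \<ge> 0" and zero: "z \<in> V" "g z = 0"
    and small: "capacity \<psi> {x\<in>V. g x > 0} \<le> 1/2"
  shows "2 * Phi_H V Adj \<psi> * dot g g
    \<le> (\<Sum>x\<in>V. \<Sum>y\<in>nbrs x. \<psi> x * \<psi> y * \<bar>(rel g x)\<^sup>2 - (rel g y)\<^sup>2\<bar>)"
proof -
  have "(rel g x)\<^sup>2 > 0 \<longleftrightarrow> g x > 0" if "x \<in> V" for x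
    using nonneg[OF that] psi_pos[OF that] by (auto simp: rel_def)
  then have "{x\<in>V. (rel g x)\<^sup>2 > 0} = {x\<in>V. g x > 0}" by blast
  moreover have "dot g g = (\<Sum>x\<in>V. (\<psi> x)\<^sup>2 * (rel g x)\<^sup>2)"
    unfolding dot_def by (intro sum.cong refl) (simp add: psi_mult_rel[symmetric, of _ g] power2_eq_square)
  ultimately have "Phi_H V Adj \<psi> * dot g g
      \<le> (\<Sum>x\<in>V. \<Sum>y\<in>nbrs x. \<psi> x * \<psi> y * max ((rel g x)\<^sup>2 - (rel g y)\<^sup>2) 0)"
    using Phi_H_mult_sum_le_sum_nbrs_max_diff[of "\<lambda>x. (rel g x)\<^sup>2", OF _ zero(1)] zero small
    by (simp add: rel_def)
  then show ?thesis using sum_nbrs_max_diff_eq[of "\<lambda>x. (rel g x)\<^sup>2"] by simp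
qed

text \<open>Cheeger's argument, applied to the positive part g = \<psi> v of an eigenfunction of H - E
  with eigenvalue \<mu>: the coarea bound, the AM-GM inequality with a free parameter t, and the
  bounds on the two resulting sums give 2 \<Phi>_H \<le> t \<mu> + 2 (-E) / t for all t > 0.\<close>
lemma Phi_H_sq_le_of_eigenfunction:
  assumes eig: "\<forall>x\<in>V. H_shift f x = \<mu> * f x"
    and pos: "p \<in> V" "f p > 0" and neg: "z \<in> V" "f z < 0"
    and small: "capacity \<psi> {x\<in>V. f x > 0} \<le> 1/2"
  shows "(Phi_H V Adj \<psi>)\<^sup>2 \<le> 2 * (- E) * \<mu>"
proof -
  define g where "g x = max (f x) 0" for x
  define v where "v = rel g"
  define N where "N = dot g g"
  have v_nonneg: "v x \<ge> 0" if "x \<in> V" for x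
    using psi_pos[OF that] by (simp add: v_def g_def rel_def)
  have "N > 0" unfolding N_def using dot_self_pos[OF pos(1), of g] pos(2) by (simp add: g_def)
  have energy: "dirichlet g g \<le> 2 * \<mu> * N"
    using dirichlet_pos_part_le[OF eig] by (simp add: N_def g_def[abs_def])
  then have "0 \<le> \<mu> * N" using dirichlet_nonneg[of g] by linarith
  then have "\<mu> \<ge> 0" using \<open>N > 0\<close> by (simp add: zero_le_mult_iff)
  have "g z = 0" using neg(2) by (simp add: g_def)
  moreover have "{x\<in>V. g x > 0} = {x\<in>V. f x > 0}" by (auto simp: g_def less_max_iff_disj)
  ultimately have coarea: "2 * Phi_H V Adj \<psi> * N
      \<le> (\<Sum>x\<in>V. \<Sum>y\<in>nbrs x. \<psi> x * \<psi> y * \<bar>(v x)\<^sup>2 - (v y)\<^sup>2\<bar>)"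
    unfolding N_def v_def using Phi_H_mult_dot_le_variation[OF _ neg(1)] small by (simp add: g_def)
  have dirichlet_v: "dirichlet g g = (\<Sum>x\<in>V. \<Sum>y\<in>nbrs x. \<psi> x * \<psi> y * (v x - v y)\<^sup>2)"
    by (simp add: dirichlet_def v_def power2_eq_square mult.assoc)
  have bound: "2 * Phi_H V Adj \<psi> \<le> t * \<mu> + 2 * (- E) / t" if "t > 0" for t
  proof -
    have "2 * Phi_H V Adj \<psi> * N \<le> t / 2 * dirichlet g g
        + (\<Sum>x\<in>V. \<Sum>y\<in>nbrs x. \<psi> x * \<psi> y * (v x + v y)\<^sup>2) / (2 * t)"
      using coarea sum_nbrs_abs_diff_sq_le[of v t, OF v_nonneg that] unfolding dirichlet_v by linarith
    also have "\<dots> \<le> t / 2 * (2 * \<mu> * N) + 4 * (- E) * N / (2 * t)"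
      using that energy sum_nbrs_rel_add_sq_le[of g]
      by (intro add_mono mult_left_mono divide_right_mono) (simp_all add: v_def N_def)
    also have "\<dots> = (t * \<mu> + 2 * (- E) / t) * N"
      using that by (simp add: field_simps)
    finally show ?thesis using \<open>N > 0\<close> by simp
  qed
  show ?thesis
    using sq_le_of_forall_le_mult_add_div[OF Phi_H_nonneg \<open>\<mu> \<ge> 0\<close> _ bound] ground_energy_neg
    by simp
qed

text \<open>An eigenfunction for another eigenvalue is orthogonal to \<psi> > 0, hence changes sign;
  replacing it by its negative if necessary, its positive part lives on a set of capacity
  at most 1/2.\<close>
lemma Phi_H_sq_le_gap:
  assumes "lam \<in> eigvals V Adj W - {E}"
  shows "(Phi_H V Adj \<psi>)\<^sup>2 \<le> 2 * (- E) * (lam - E)"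
proof -
  obtain f x where f: "x \<in> V" "f x \<noteq> 0" "\<forall>x\<in>V. H f x = lam * f x"
    using eigvals_real_eigenfunction assms by blast
  have "dot \<psi> f = 0"
    using eigenfunctions_orthogonal[of \<psi> E f lam] psi_eigen f(3) assms by auto
  then have "\<exists>p\<in>V. f p > 0" "\<exists>z\<in>V. - f z > 0"
    using exists_pos_if_dot_psi_eq_0[of f x] exists_pos_if_dot_psi_eq_0[of "\<lambda>x. - f x" x] f(1,2)
    by (simp_all add: dot_def sum_negf)
  then obtain p z where pz: "p \<in> V" "f p > 0" "z \<in> V" "f z < 0" by auto
  have eig: "\<forall>x\<in>V. H_shift f x = (lam - E) * f x"
    using f(3) by (simp add: H_shift_def algebra_simps)
  define P where "P = {x\<in>V. f x > 0}"
  define Q where "Q = {x\<in>V. - f x > 0}"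
  have "capacity \<psi> P + capacity \<psi> Q = capacity \<psi> (P \<union> Q)"
    unfolding capacity_def P_def Q_def using finite_V by (intro sum.union_disjoint[symmetric]) auto
  also have "\<dots> \<le> capacity \<psi> V"
    unfolding capacity_def P_def Q_def using finite_V by (intro sum_mono2) auto
  finally consider "capacity \<psi> P \<le> 1/2" | "capacity \<psi> Q \<le> 1/2"
    using psi_normalised unfolding capacity_def by linarith
  then show ?thesis
  proof cases
    case 1
    then show ?thesis using Phi_H_sq_le_of_eigenfunction[OF eig pz] by (simp add: P_def)
  next
    case 2
    moreover have "\<forall>x\<in>V. H_shift (\<lambda>x. - f x) x = (lam - E) * - f x"
      using eig by (simp add: H_shift_uminus)
    ultimately show ?thesis
      using Phi_H_sq_le_of_eigenfunction[of "\<lambda>x. - f x" "lam - E" z p] pz by (simp add: Q_def)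
  qed
qed

end

theorem proposition3:
  fixes V :: "'a set" and Adj :: "'a \<Rightarrow> 'a \<Rightarrow> bool" and W \<psi> :: "'a \<Rightarrow> real"
  assumes "simple_graph V Adj" and "connected_graph V Adj" and "card V \<ge> 2"
    and "\<forall>x\<in>V. W x \<le> - real (max_deg V Adj)"
    and "\<forall>x\<in>V. \<psi> x > 0" and "(\<Sum>x\<in>V. (\<psi> x)\<^sup>2) = 1"
    and "\<forall>x\<in>V. Hop V Adj W \<psi> x = ground_energy V Adj W * \<psi> x"
  shows "ground_energy V Adj W < 0
    \<and> - (1 / (2 * ground_energy V Adj W)) * (Phi_H V Adj \<psi>)\<^sup>2 \<le> spectral_gap V Adj W
    \<and> spectral_gap V Adj W \<le> 2 * Phi_H V Adj \<psi>"
proof -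
  define E where "E = ground_energy V Adj W"
  interpret cheeger_setting V Adj W \<psi> E
    using assms unfolding simple_graph_def connected_graph_def E_def by unfold_locales auto
  define lam\<^sub>2 where "lam\<^sub>2 = Min (eigvals V Adj W - {E})"
  obtain lam where lam: "lam \<in> eigvals V Adj W - {E}" "lam - E \<le> 2 * Phi_H V Adj \<psi>"
    using exists_eigval_gap_le_2Phi_H by blast
  have finite: "finite (eigvals V Adj W - {E})" using finite_eigvals by simp
  then have "lam\<^sub>2 \<in> eigvals V Adj W - {E}"
    unfolding lam\<^sub>2_def using lam(1) by (intro Min_in) auto
  have "lam\<^sub>2 \<le> lam" unfolding lam\<^sub>2_def by (rule Min_le[OF finite lam(1)])
  have "E < 0" by (rule ground_energy_neg)
  have "- (1 / (2 * E)) * (Phi_H V Adj \<psi>)\<^sup>2 = (Phi_H V Adj \<psi>)\<^sup>2 / (2 * (- E))" by simp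
  also have "\<dots> \<le> lam\<^sub>2 - E"
    using Phi_H_sq_le_gap[OF \<open>lam\<^sub>2 \<in> _\<close>] \<open>E < 0\<close> by (subst pos_divide_le_eq) (auto simp: mult.commute)
  finally have "- (1 / (2 * E)) * (Phi_H V Adj \<psi>)\<^sup>2 \<le> lam\<^sub>2 - E" .
  then show ?thesis
    using \<open>E < 0\<close> \<open>lam\<^sub>2 \<le> lam\<close> lam(2)
    unfolding spectral_gap_def E_def[symmetric] lam\<^sub>2_def[symmetric] by simp
qed

end
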